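(* Let $q\ge 2$ be an even integer. There is no generalized quadrangle of order $(q,q^2-q)$ admitting a group of automorphisms acting regularly on its point set.
   Context: A generalized quadrangle of order $(s,t)$ is an incidence structure of points and lines such that each point is on $t+1$ lines and two points lie on at most one common line, each line contains $s+1$ points and two lines share at most one point, and for any point $P$ and line $\ell$ not incident with $P$ there is exactly one point on $\ell$ collinear with $P$. A group acts regularly on the points if it acts (by collineations) transitively with trivial point stabilizers. *)

theory Defs
  imports "HOL-Algebra.Group_Action"
begin

text \<open>A generalized quadrangle of order (s,t): point set P, line set L, incidence I.
  Nonemptiness of the point set is part of the (standard) notion of a geometry.\<close>
definition gen_quadrangle ::
  "'p set \<Rightarrow> 'l set \<Rightarrow> ('p \<Rightarrow> 'l \<Rightarrow> bool) \<Rightarrow> nat \<Rightarrow> nat \<Rightarrow> bool" where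
  "gen_quadrangle P L I s t \<longleftrightarrow>
     P \<noteq> {} \<and>
     (\<forall>p\<in>P. card {l\<in>L. I p l} = t + 1) \<and>
     (\<forall>p\<in>P. \<forall>p'\<in>P. \<forall>l\<in>L. \<forall>l'\<in>L.
        p \<noteq> p' \<and> I p l \<and> I p' l \<and> I p l' \<and> I p' l' \<longrightarrow> l = l') \<and>
     (\<forall>l\<in>L. card {p\<in>P. I p l} = s + 1) \<and>
     (\<forall>l\<in>L. \<forall>l'\<in>L. \<forall>p\<in>P. \<forall>p'\<in>P.
        l \<noteq> l' \<and> I p l \<and> I p l' \<and> I p' l \<and> I p' l' \<longrightarrow> p = p') \<and>
     (\<forall>p\<in>P. \<forall>l\<in>L. \<not> I p l \<longrightarrow>
        (\<exists>!p'. p' \<in> P \<and> I p' l \<and> (\<exists>m\<in>L. I p m \<and> I p' m)))"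

definition collineation_action ::
  "('g, 'b) monoid_scheme \<Rightarrow> 'p set \<Rightarrow> 'l set \<Rightarrow> ('p \<Rightarrow> 'l \<Rightarrow> bool)
     \<Rightarrow> ('g \<Rightarrow> 'p \<Rightarrow> 'p) \<Rightarrow> ('g \<Rightarrow> 'l \<Rightarrow> 'l) \<Rightarrow> bool" where
  "collineation_action G P L I \<phi> \<psi> \<longleftrightarrow>
     group_action G P \<phi> \<and> group_action G L \<psi> \<and>
     (\<forall>g\<in>carrier G. \<forall>p\<in>P. \<forall>l\<in>L. I p l \<longleftrightarrow> I (\<phi> g p) (\<psi> g l))"

definition regular_on_points ::
  "('g, 'b) monoid_scheme \<Rightarrow> 'p set \<Rightarrow> ('g \<Rightarrow> 'p \<Rightarrow> 'p) \<Rightarrow> bool" where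
  "regular_on_points G P \<phi> \<longleftrightarrow>
     transitive_action G P \<phi> \<and> (\<forall>x\<in>P. stabilizer G \<phi> x = {\<one>\<^bsub>G\<^esub>})"

end

(* The collinearity graph of a generalized quadrangle of order (s, t) is strongly regular:
   besides s (t + 1), its adjacency matrix A has the eigenvalues s - 1 and -(t + 1), and
   E = (A + (t + 1) I - c J) / (s + t) is the projection onto the (s - 1)-eigenspace.  If G acts
   regularly on the points, E commutes with every permutation matrix P_g, so (E P_g)^(|G| + 1)
   = E P_g, and the trace of E P_g is an integer.  For g <> 1 this trace is
   (c(g) - s (t + 1) - t - 1) / (s + t), where c(g) counts the points x collinear with x^g.
   For (s, t) = (q, q^2 - q) with q even, |G| = (q + 1)(q^3 - q^2 + 1) is odd, so the elements
   g <> 1 pair off with their inverses; as c(g^-1) = c(g), the sum of the integers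
   (c(g) - q^3 - 1) / q^2 over all g <> 1 is even.  Double counting gives
   sum_g c(g) = |P| q (q^2 - q + 1), which makes that sum equal to -(q^3 + 1)(q - 1), an odd
   number. *)

theory Submission
  imports
    Defs
    "Jordan_Normal_Form.Schur_Decomposition"
    "Berlekamp_Zassenhaus.Factor_Bound"
    "HOL-Algebra.Multiplicative_Group"
    "HOL-Library.Z2"
    "HOL-Library.Disjoint_Sets"
begin

section \<open>Traces of periodic rational matrices\<close>

definition trace :: "'a::comm_ring_1 mat \<Rightarrow> 'a" where
  "trace A = (\<Sum>i<dim_row A. A $$ (i, i))"

lemma trace_mult_comm:
  assumes "A \<in> carrier_mat n m" and "B \<in> carrier_mat m n"
  shows "trace (A * B) = trace (B * A)"
proof -
  have "trace (A * B) = (\<Sum>i<n. \<Sum>k<m. A $$ (i, k) * B $$ (k, i))"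
    using assms by (simp add: trace_def scalar_prod_def atLeast0LessThan)
  also have "\<dots> = (\<Sum>k<m. \<Sum>i<n. B $$ (k, i) * A $$ (i, k))"
    by (subst sum.swap) (simp add: mult.commute)
  also have "\<dots> = trace (B * A)"
    using assms by (simp add: trace_def scalar_prod_def atLeast0LessThan)
  finally show ?thesis .
qed

lemma trace_similar_mat_wit:
  assumes "similar_mat_wit A B P Q"
  shows "trace A = trace B"
proof -
  from assms obtain n where carrier: "A \<in> carrier_mat n n" "B \<in> carrier_mat n n"
      "P \<in> carrier_mat n n" "Q \<in> carrier_mat n n"
    and QP: "Q * P = 1\<^sub>m n" and A: "A = P * B * Q"
    unfolding similar_mat_wit_def Let_def by auto
  have "trace A = trace (P * (B * Q))" using A carrier by (simp add: assoc_mult_mat)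
  also have "\<dots> = trace (B * Q * P)" using carrier by (intro trace_mult_comm) auto
  also have "B * Q * P = B" using carrier QP by (simp add: assoc_mult_mat)
  finally show ?thesis .
qed

lemma trace_of_rat_mat:
  assumes "A \<in> carrier_mat n n"
  shows "trace (of_rat_hom.mat_hom A) = (of_rat (trace A) :: 'a::field_char_0)"
  using assms by (simp add: trace_def of_rat_sum)

lemma coeff_prod_linear_factors_pred:
  fixes as :: "'a::idom list"
  assumes "as \<noteq> []"
  shows "Polynomial.coeff (\<Prod>a\<leftarrow>as. [:- a, 1:]) (length as - 1) = - sum_list as"
  using assms
proof (induction as)
  case (Cons a as)
  let ?p = "\<Prod>a\<leftarrow>as. [:- a, 1:]"
  have "monic ?p"
    by (rule monic_prod_list) auto
  then have lead: "Polynomial.coeff ?p (length as) = 1"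
    by (metis degree_linear_factors)
  show ?case
  proof (cases "as = []")
    case False
    then show ?thesis using Cons.IH lead
      by (cases "length as") (auto simp: mult_pCons_left coeff_pCons algebra_simps)
  qed simp
qed simp

lemma trace_eq_sum_list_eigenvalues:
  fixes A :: "'a::conjugatable_ordered_field mat"
  assumes A: "A \<in> carrier_mat n n" and char_poly: "char_poly A = (\<Prod>e\<leftarrow>es. [:- e, 1:])"
  shows "trace A = sum_list es"
proof -
  obtain B P Q where "schur_decomposition A es = (B, P, Q)"
    by (cases "schur_decomposition A es")
  with schur_decomposition[OF A char_poly]
  have sim: "similar_mat_wit A B P Q" and diag: "diag_mat B = es" by auto
  have B: "B \<in> carrier_mat n n"
    using sim A unfolding similar_mat_wit_def Let_def by auto
  have "trace A = trace B" by (rule trace_similar_mat_wit[OF sim])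
  also have "\<dots> = sum_list es"
    unfolding diag[symmetric] diag_mat_def trace_def using B
    by (simp add: sum_list_sum_nth atLeast0LessThan)
  finally show ?thesis .
qed

lemma eigenvalue_pow_Suc_eq:
  fixes X :: "'a::field mat"
  assumes X: "X \<in> carrier_mat n n" and periodic: "X ^\<^sub>m Suc N = X" and "eigenvalue X a"
  shows "a ^ Suc N = a"
proof -
  obtain w where ev: "eigenvector X w a"
    using \<open>eigenvalue X a\<close> unfolding eigenvalue_def by blast
  then have w: "w \<in> carrier_vec n" "w \<noteq> 0\<^sub>v n" and Xw: "X *\<^sub>v w = a \<cdot>\<^sub>v w"
    using X unfolding eigenvector_def by auto
  obtain i where i: "i < n" "w $ i \<noteq> 0"
    using w by (metis carrier_vecD eq_vecI index_zero_vec)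
  have "a ^ Suc N \<cdot>\<^sub>v w = a \<cdot>\<^sub>v w"
    using eigenvector_pow[OF X ev, of "Suc N"] periodic Xw by simp
  from arg_cong[OF this, of "\<lambda>u. u $ i"] i w show ?thesis by simp
qed

lemma char_poly_dvd_if_pow_Suc_eq:
  fixes X :: "complex mat"
  assumes X: "X \<in> carrier_mat n n" and periodic: "X ^\<^sub>m Suc N = X"
  shows "char_poly X dvd ([:0, 1:] ^ Suc N - [:0, 1:]) ^ n"
proof -
  obtain es where char_poly: "char_poly X = (\<Prod>e\<leftarrow>es. [:- e, 1:])" and len: "length es = n"
    using char_poly_factorized[OF X] by blast
  have "[:- e, 1:] dvd [:0, 1:] ^ Suc N - [:0, 1:]" if "e \<in> set es" for e
  proof -
    have "eigenvalue X e"
      using that unfolding eigenvalue_root_char_poly[OF X] char_poly poly_prod_list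
      by (auto simp: prod_list_zero_iff)
    then have "e ^ Suc N = e" by (rule eigenvalue_pow_Suc_eq[OF X periodic])
    then have "poly ([:0, 1:] ^ Suc N - [:0, 1:]) e = 0"
      by (simp only: poly_diff poly_power) simp
    then show ?thesis by (simp only: poly_eq_0_iff_dvd)
  qed
  then have "char_poly X dvd (\<Prod>e\<leftarrow>es. [:0, 1:] ^ Suc N - [:0, 1:])"
    unfolding char_poly by (induction es) (simp_all add: mult_dvd_mono del: mult_pCons_left)
  then show ?thesis by (simp add: map_replicate_const len)
qed

lemma monic_rat_factor_of_monic_int_poly:
  fixes p :: "rat poly" and f :: "int poly"
  assumes "p dvd of_int_poly f" and "monic p" and "monic f"
  obtains g where "p = of_int_poly g"
proof -
  obtain h where factor: "of_int_poly f = p * h"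
    using assms(1) by (auto elim: dvdE)
  obtain r g where normalized: "rat_to_normalized_int_poly p = (r, g)" by force
  note p_eq = rat_to_normalized_int_poly(1,2)[OF normalized]
  obtain h' where "f = g * smult (content f) h'"
    using rat_to_int_factor_explicit[OF factor normalized] by blast
  then have "lead_coeff g dvd 1"
    using \<open>monic f\<close> by (metis dvdI lead_coeff_mult)
  then have "\<bar>lead_coeff g\<bar> = 1"
    by (simp add: zdvd1_eq)
  then have "lead_coeff g = 1 \<or> lead_coeff g = -1"
    by linarith
  moreover have "r * of_int (lead_coeff g) = 1"
    using \<open>monic p\<close> p_eq(1) by (metis lead_coeff_smult of_int_hom.hom_lead_coeff)
  ultimately have "r = 1" using p_eq(2) by auto
  with p_eq(1) show ?thesis using that by simp
qed

lemma monic_X_pow_Suc_minus_X: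
  assumes "N > 0"
  shows "monic ([:0, 1::'a::idom:] ^ Suc N - [:0, 1:])"
proof -
  have degree: "degree ([:0, 1::'a:] ^ Suc N) = Suc N" by (rule degree_linear_power)
  have lead: "lead_coeff ([:0, 1::'a:] ^ Suc N) = 1" by (simp only: lead_coeff_power) simp
  have "[:0, 1:] ^ Suc N - [:0, 1:] = - [:0, 1:] + [:0, 1::'a:] ^ Suc N" by simp
  also have "lead_coeff \<dots> = 1"
    using assms lead by (subst lead_coeff_add_le) (simp_all only: degree degree_minus, simp_all)
  finally show ?thesis .
qed

(* The eigenvalues of X are 0 or roots of unity, so char_poly X divides (x^(N+1) - x)^n; by
   Gauss's lemma it has integer coefficients, and the trace is minus one of them. *)
theorem trace_in_Ints_if_pow_Suc_eq:
  fixes X :: "rat mat"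
  assumes X: "X \<in> carrier_mat n n" and "N > 0" and periodic: "X ^\<^sub>m Suc N = X"
  shows "trace X \<in> \<int>"
proof (cases "n = 0")
  case True
  then show ?thesis using X by (simp add: trace_def)
next
  case False
  define Xc :: "complex mat" where "Xc = of_rat_hom.mat_hom X"
  have Xc: "Xc \<in> carrier_mat n n" using X by (simp add: Xc_def)
  have periodic_c: "Xc ^\<^sub>m Suc N = Xc"
    unfolding Xc_def of_rat_hom.mat_hom_pow[OF X, symmetric] periodic ..
  have char_poly_c: "char_poly Xc = map_poly of_rat (char_poly X)"
    unfolding Xc_def by (rule of_rat_hom.char_poly_hom[OF X])
  define f :: "int poly" where "f = ([:0, 1:] ^ Suc N - [:0, 1:]) ^ n"
  have "map_poly (of_rat :: rat \<Rightarrow> complex) (of_int_poly f) = of_int_poly f"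
    by (simp add: map_poly_map_poly o_def)
  also have "\<dots> = ([:0, 1:] ^ Suc N - [:0, 1:]) ^ n"
    unfolding f_def by (simp only: of_int_poly_hom.hom_power of_int_poly_hom.hom_minus) simp
  finally have "map_poly of_rat (char_poly X) dvd map_poly (of_rat :: rat \<Rightarrow> complex) (of_int_poly f)"
    using char_poly_dvd_if_pow_Suc_eq[OF Xc periodic_c] by (simp only: char_poly_c)
  then have "char_poly X dvd of_int_poly f"
    by (rule of_rat_hom.dvd_map_poly_hom_imp_dvd)
  moreover have "monic (char_poly X)"
    using degree_monic_char_poly[OF X] by simp
  moreover have "monic f"
    unfolding f_def by (rule monic_power[OF monic_X_pow_Suc_minus_X[OF \<open>N > 0\<close>]])
  ultimately obtain g where g: "char_poly X = of_int_poly g"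
    by (rule monic_rat_factor_of_monic_int_poly)
  obtain es where es: "char_poly Xc = (\<Prod>e\<leftarrow>es. [:- e, 1:])" and len: "length es = n"
    using char_poly_factorized[OF Xc] by blast
  have "of_rat (trace X) = trace Xc"
    unfolding Xc_def by (rule trace_of_rat_mat[OF X, symmetric])
  also have "\<dots> = sum_list es"
    by (rule trace_eq_sum_list_eigenvalues[OF Xc es])
  also have "\<dots> = - Polynomial.coeff (char_poly Xc) (n - 1)"
    using coeff_prod_linear_factors_pred[of es] es len \<open>n \<noteq> 0\<close> by auto
  also have "\<dots> = of_rat (- of_int (Polynomial.coeff g (n - 1)))"
    unfolding char_poly_c g by (simp add: coeff_map_poly of_rat_minus)
  finally show ?thesis
    unfolding of_rat_eq_iff by simp
qed

section \<open>Finite group actions\<close>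

lemma (in group_action) acting_group: "group G"
  using group_hom group_hom.axioms(1) by auto

lemma (in group_action) orbit_map_bij_if_regular:
  assumes "regular_on_points G E \<phi>" and x: "x \<in> E"
  shows "bij_betw (\<lambda>g. \<phi> g x) (carrier G) E"
proof (rule bij_betw_imageI)
  interpret group G by (rule acting_group)
  show "inj_on (\<lambda>g. \<phi> g x) (carrier G)"
  proof (rule inj_onI)
    fix g h assume g: "g \<in> carrier G" and h: "h \<in> carrier G" and "\<phi> g x = \<phi> h x"
    then have "\<phi> (inv h \<otimes> g) x = x"
      using x by (metis composition_rule inv_closed orbit_sym_aux)
    then have "inv h \<otimes> g \<in> stabilizer G \<phi> x"
      using g h by (simp add: stabilizer_def)
    then have "inv h \<otimes> g = \<one>"
      using assms x unfolding regular_on_points_def by simp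
    then show "g = h" using g h by (metis inv_closed inv_equality inv_inv)
  qed
  have "transitive_action G E \<phi>"
    using assms(1) unfolding regular_on_points_def by blast
  then show "(\<lambda>g. \<phi> g x) ` carrier G = E"
    using x element_image transitive_action.unique_orbit by fastforce
qed

lemma (in group_action) order_eq_card_if_regular:
  assumes "regular_on_points G E \<phi>" and "E \<noteq> {}"
  shows "Coset.order G = card E"
proof -
  obtain x where "x \<in> E" using assms(2) by blast
  show ?thesis
    using bij_betw_same_card[OF orbit_map_bij_if_regular[OF assms(1) \<open>x \<in> E\<close>]]
    by (simp add: Coset.order_def)
qed

lemma (in group_action) bij_betw_action:
  "g \<in> carrier G \<Longrightarrow> bij_betw (\<phi> g) E E"
  using bij_prop0 by (simp add: Bij_def)

lemma (in group_action) sum_card_related_to_image: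
  assumes "regular_on_points G E \<phi>" and "finite E"
  shows "(\<Sum>g\<in>carrier G. card {x\<in>E. R x (\<phi> g x)}) = (\<Sum>x\<in>E. card {y\<in>E. R x y})"
proof -
  have card_as_sum: "card {y\<in>E. Q y} = (\<Sum>y\<in>E. of_bool (Q y))" for Q
    using sum.inter_filter[OF \<open>finite E\<close>, of "\<lambda>_. 1 :: nat" Q] by (simp add: of_bool_def)
  have "(\<Sum>g\<in>carrier G. card {x\<in>E. R x (\<phi> g x)})
      = (\<Sum>x\<in>E. \<Sum>g\<in>carrier G. of_bool (R x (\<phi> g x)))"
    unfolding card_as_sum by (rule sum.swap)
  also have "\<dots> = (\<Sum>x\<in>E. \<Sum>y\<in>E. of_bool (R x y))"
  proof (rule sum.cong[OF refl])
    fix x assume "x \<in> E"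
    show "(\<Sum>g\<in>carrier G. of_bool (R x (\<phi> g x))) = (\<Sum>y\<in>E. of_bool (R x y))"
      by (rule sum.reindex_bij_betw[OF orbit_map_bij_if_regular[OF assms(1) \<open>x \<in> E\<close>]])
  qed
  also have "\<dots> = (\<Sum>x\<in>E. card {y\<in>E. R x y})"
    unfolding card_as_sum ..
  finally show ?thesis .
qed

lemma (in group_action) card_related_to_image_inv:
  assumes sym: "\<And>x y. x \<in> E \<Longrightarrow> y \<in> E \<Longrightarrow> R x y \<Longrightarrow> R y x" and g: "g \<in> carrier G"
  shows "card {x\<in>E. R x (\<phi> (inv g) x)} = card {x\<in>E. R x (\<phi> g x)}"
proof -
  interpret group G by (rule acting_group)
  have "{x\<in>E. R x (\<phi> (inv g) x)} = \<phi> g ` {x\<in>E. R x (\<phi> g x)}"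
  proof (intro equalityI subsetI)
    fix y assume "y \<in> {x\<in>E. R x (\<phi> (inv g) x)}"
    then have y: "y \<in> E" "R y (\<phi> (inv g) y)" by auto
    define x where "x = \<phi> (inv g) y"
    have x: "x \<in> E"
      using element_image[OF inv_closed[OF g] y(1)] x_def by simp
    have "\<phi> g x = y"
      using orbit_sym_aux[OF inv_closed[OF g] y(1) x_def[symmetric]] g by simp
    with x y sym show "y \<in> \<phi> g ` {x\<in>E. R x (\<phi> g x)}"
      unfolding x_def[symmetric] by (intro image_eqI[of y "\<phi> g" x]) auto
  next
    fix y assume "y \<in> \<phi> g ` {x\<in>E. R x (\<phi> g x)}"
    then obtain x where "x \<in> E" "R x (\<phi> g x)" "y = \<phi> g x" by blast
    then show "y \<in> {x\<in>E. R x (\<phi> (inv g) x)}"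
      using g element_image orbit_sym_aux sym by auto
  qed
  moreover have "inj_on (\<phi> g) {x\<in>E. R x (\<phi> g x)}"
    using inj_prop[OF g] by (rule inj_on_subset) auto
  ultimately show ?thesis by (simp add: card_image)
qed

(* Summing in Z/2, each orbit {x, h x} contributes f x + f x = 0. *)
lemma even_sum_involution_invariant:
  fixes f :: "'a \<Rightarrow> int"
  assumes "\<And>x. x \<in> X \<Longrightarrow> h x \<in> X" and "\<And>x. x \<in> X \<Longrightarrow> h (h x) = x"
    and "\<And>x. x \<in> X \<Longrightarrow> h x \<noteq> x" and "\<And>x. x \<in> X \<Longrightarrow> f (h x) = f x"
  shows "even (\<Sum>x\<in>X. f x)"
proof -
  have "(\<Sum>x\<in>X. of_int (f x) :: bit) = 0"
  proof (rule sum_involution_eq_0)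
    fix x assume "x \<in> X"
    then show "of_int (f (h x)) + of_int (f x) = (0 :: bit)"
      using assms(4) by simp
  qed (use assms in auto)
  then show ?thesis
    by (metis even_of_int_iff even_zero of_int_sum)
qed

lemma (in group) inv_neq_self_if_odd_order:
  assumes "odd (Coset.order G)" and g: "g \<in> carrier G" and "g \<noteq> \<one>"
  shows "inv g \<noteq> g"
proof
  assume "inv g = g"
  then have "g [^] (2::nat) = \<one>"
    using g by (simp add: numeral_2_eq_2 flip: r_inv)
  then have "ord g dvd 2" using g by (simp add: pow_eq_id)
  then have "ord g \<le> 2" by (rule dvd_imp_le) simp
  moreover have "odd (ord g)"
    using assms(1) ord_dvd_group_order[OF g] by (meson dvd_trans)
  ultimately have "ord g = 1" by presburger
  then show False using g \<open>g \<noteq> \<one>\<close> ord_eq_1 by simp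
qed

lemma (in group) even_sum_nontrivial_if_odd_order:
  fixes f :: "'a \<Rightarrow> int"
  assumes "odd (Coset.order G)" and "\<And>g. g \<in> carrier G \<Longrightarrow> f (inv g) = f g"
  shows "even (\<Sum>g\<in>carrier G - {\<one>}. f g)"
  by (rule even_sum_involution_invariant[where h = "\<lambda>g. inv g"])
    (use assms inv_neq_self_if_odd_order in auto)

definition kernel_mat :: "(nat \<Rightarrow> 'a) \<Rightarrow> nat \<Rightarrow> ('a \<Rightarrow> 'a \<Rightarrow> 'b) \<Rightarrow> 'b mat" where
  "kernel_mat e n K = mat n n (\<lambda>(i, j). K (e i) (e j))"

lemma kernel_mat_mult:
  assumes e: "bij_betw e {..<n} V"
  shows "kernel_mat e n K * kernel_mat e n K' = kernel_mat e n (\<lambda>x y. \<Sum>z\<in>V. K x z * K' z y)"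
proof (rule eq_matI)
  fix i j assume "i < dim_row (kernel_mat e n (\<lambda>x y. \<Sum>z\<in>V. K x z * K' z y))"
    and "j < dim_col (kernel_mat e n (\<lambda>x y. \<Sum>z\<in>V. K x z * K' z y))"
  then have "i < n" "j < n" by (auto simp: kernel_mat_def)
  then show "(kernel_mat e n K * kernel_mat e n K') $$ (i, j) =
      kernel_mat e n (\<lambda>x y. \<Sum>z\<in>V. K x z * K' z y) $$ (i, j)"
    using sum.reindex_bij_betw[OF e, of "\<lambda>z. K (e i) z * K' z (e j)"]
    by (simp add: kernel_mat_def scalar_prod_def atLeast0LessThan)
qed (auto simp: kernel_mat_def)

lemma trace_kernel_mat:
  assumes e: "bij_betw e {..<n} V"
  shows "trace (kernel_mat e n K) = (\<Sum>x\<in>V. K x x)"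
  using sum.reindex_bij_betw[OF e, of "\<lambda>x. K x x"] by (simp add: trace_def kernel_mat_def)

theorem (in group) kernel_trace_in_Ints:
  fixes K :: "'a \<Rightarrow> 'v \<Rightarrow> 'v \<Rightarrow> rat"
  assumes "finite (carrier G)" and "finite V"
    and mult: "\<And>g h x y. \<lbrakk>g \<in> carrier G; h \<in> carrier G; x \<in> V; y \<in> V\<rbrakk>
      \<Longrightarrow> (\<Sum>z\<in>V. K g x z * K h z y) = K (g \<otimes> h) x y"
    and g: "g \<in> carrier G"
  shows "(\<Sum>x\<in>V. K g x x) \<in> \<int>"
proof -
  obtain e where e: "bij_betw e {..<card V} V"
    using ex_bij_betw_nat_finite[OF \<open>finite V\<close>] by (auto simp: atLeast0LessThan)
  define M where "M h = kernel_mat e (card V) (K h)" for h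
  have M_mult: "M h * M h' = M (h \<otimes> h')" if "h \<in> carrier G" "h' \<in> carrier G" for h h'
  proof -
    have "M h * M h' = kernel_mat e (card V) (\<lambda>x y. \<Sum>z\<in>V. K h x z * K h' z y)"
      unfolding M_def by (rule kernel_mat_mult[OF e])
    also have "\<dots> = M (h \<otimes> h')"
      unfolding M_def kernel_mat_def using e mult[OF that]
      by (intro eq_matI) (auto simp: bij_betw_apply)
    finally show ?thesis .
  qed
  have M_pow: "M g ^\<^sub>m Suc m = M (g [^] Suc m)" for m
  proof (induction m)
    case 0
    show ?case using g by (simp add: M_def kernel_mat_def)
  next
    case (Suc m)
    have "M g ^\<^sub>m Suc (Suc m) = M (g [^] Suc m) * M g"
      using Suc.IH by simp
    also have "\<dots> = M (g [^] Suc (Suc m))"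
      using M_mult[OF nat_pow_closed[OF g] g] by (simp only: nat_pow_Suc[of g "Suc m"])
    finally show ?case .
  qed
  have "M g ^\<^sub>m Suc (Coset.order G) = M (g [^] Suc (Coset.order G))"
    by (rule M_pow)
  also have "g [^] Suc (Coset.order G) = g"
    using g pow_order_eq_1 by (simp add: nat_pow_Suc2)
  finally have "M g ^\<^sub>m Suc (Coset.order G) = M g" .
  moreover have "Coset.order G > 0"
    using \<open>finite (carrier G)\<close> one_closed unfolding Coset.order_def by (auto simp: card_gt_0_iff)
  ultimately have "trace (M g) \<in> \<int>"
    by (intro trace_in_Ints_if_pow_Suc_eq[of _ "card V"]) (auto simp: M_def kernel_mat_def)
  then show ?thesis
    unfolding M_def trace_kernel_mat[OF e] .
qed

section \<open>Strongly regular graphs\<close>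

locale strongly_regular_graph =
  fixes V :: "'a set" and adj :: "'a \<Rightarrow> 'a \<Rightarrow> bool" and k lambda mu :: nat
  assumes finite_vertices: "finite V"
    and adj_irrefl: "x \<in> V \<Longrightarrow> \<not> adj x x"
    and adj_sym: "x \<in> V \<Longrightarrow> y \<in> V \<Longrightarrow> adj x y \<Longrightarrow> adj y x"
    and degree: "x \<in> V \<Longrightarrow> card {y\<in>V. adj x y} = k"
    and common_neighbours_adj:
      "x \<in> V \<Longrightarrow> y \<in> V \<Longrightarrow> adj x y \<Longrightarrow> card {z\<in>V. adj x z \<and> adj z y} = lambda"
    and common_neighbours_nonadj:
      "x \<in> V \<Longrightarrow> y \<in> V \<Longrightarrow> x \<noteq> y \<Longrightarrow> \<not> adj x y \<Longrightarrow> card {z\<in>V. adj x z \<and> adj z y} = mu"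
begin

lemma sum_of_bool_card:
  "(\<Sum>y\<in>V. of_bool (P y) :: rat) = of_nat (card {y\<in>V. P y})"
  using sum.inter_filter[OF finite_vertices, of "\<lambda>_. 1 :: rat" P] by (simp add: of_bool_def)

lemma sum_of_bool_eq_mult:
  assumes "w \<in> V"
  shows "(\<Sum>z\<in>V. of_bool (z = w) * f z :: rat) = f w"
proof -
  have "(\<Sum>z\<in>V. of_bool (z = w) * f z) = (\<Sum>z\<in>V. if z = w then f z else 0)"
    by (intro sum.cong) auto
  then show ?thesis using assms finite_vertices by simp
qed

lemma sum_adj_row: "x \<in> V \<Longrightarrow> (\<Sum>y\<in>V. of_bool (adj x y) :: rat) = of_nat k"
  by (simp add: sum_of_bool_card degree)

lemma sum_adj_col:
  assumes "y \<in> V"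
  shows "(\<Sum>x\<in>V. of_bool (adj x y) :: rat) = of_nat k"
proof -
  have "(\<Sum>x\<in>V. of_bool (adj x y) :: rat) = (\<Sum>x\<in>V. of_bool (adj y x))"
    using assms adj_sym by (intro sum.cong) auto
  then show ?thesis using sum_adj_row[OF assms] by simp
qed

lemma sum_adj_adj:
  assumes x: "x \<in> V" and y: "y \<in> V"
  shows "(\<Sum>z\<in>V. of_bool (adj x z) * of_bool (adj z y) :: rat)
    = of_nat mu + (of_nat k - of_nat mu) * of_bool (x = y) + (of_nat lambda - of_nat mu) * of_bool (adj x y)"
proof -
  have sum_eq_card: "(\<Sum>z\<in>V. of_bool (adj x z) * of_bool (adj z y) :: rat)
      = of_nat (card {z\<in>V. adj x z \<and> adj z y})"
    by (simp add: sum_of_bool_card flip: of_bool_conj)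
  consider "x = y" | "x \<noteq> y" "adj x y" | "x \<noteq> y" "\<not> adj x y" by blast
  then show ?thesis
  proof cases
    case 1
    then have "{z\<in>V. adj x z \<and> adj z y} = {z\<in>V. adj x z}"
      using x adj_sym by blast
    with 1 show ?thesis using sum_eq_card x adj_irrefl degree by simp
  qed (use x y sum_eq_card common_neighbours_adj common_neighbours_nonadj in simp_all)
qed

lemma parameter_identity:
  assumes "V \<noteq> {}"
  shows "(of_nat k :: rat) * (of_nat k - of_nat lambda - 1) = (of_nat (card V) - of_nat k - 1) * of_nat mu"
proof -
  obtain x where x: "x \<in> V" using assms by blast
  have "(\<Sum>y\<in>V. \<Sum>z\<in>V. of_bool (adj x z) * of_bool (adj z y) :: rat)
      = (\<Sum>z\<in>V. of_bool (adj x z) * (\<Sum>y\<in>V. of_bool (adj z y)))"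
    by (subst sum.swap) (simp add: sum_distrib_left)
  also have "\<dots> = of_nat k * of_nat k"
    using sum_adj_row x by (simp add: sum_distrib_right[symmetric])
  finally have "of_nat k * of_nat k = (\<Sum>y\<in>V.
      of_nat mu + (of_nat k - of_nat mu) * of_bool (x = y) + (of_nat lambda - of_nat mu) * of_bool (adj x y) :: rat)"
    using sum_adj_adj[OF x] by simp
  also have "\<dots> = of_nat (card V) * of_nat mu + (of_nat k - of_nat mu) + (of_nat lambda - of_nat mu) * of_nat k"
    using x finite_vertices sum_adj_row[OF x]
    by (simp add: sum.distrib sum_distrib_left[symmetric] of_bool_def)
  finally show ?thesis by (simp add: algebra_simps)
qed

(* For the two eigenvalues r, s of the adjacency matrix A other than k, the roots of
   x^2 - (lambda - mu) x - (k - mu), this is the projection (A - s I - (k - s)/v J) / (r - s)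
   onto the r-eigenspace. *)
definition eigenprojection :: "rat \<Rightarrow> rat \<Rightarrow> 'a \<Rightarrow> 'a \<Rightarrow> rat" where
  "eigenprojection r s x y =
    (of_bool (adj x y) - s * of_bool (x = y) - (of_nat k - s) / of_nat (card V)) / (r - s)"

lemma eigenvalues_parameter_identity:
  fixes r s :: rat
  assumes eigenvalues: "r + s = of_nat lambda - of_nat mu" "r * s = of_nat mu - of_nat k"
    and "V \<noteq> {}"
  shows "of_nat (card V) * of_nat mu = (of_nat k - r) * (of_nat k - s)"
proof -
  have "(of_nat k - r) * (of_nat k - s) = of_nat k * of_nat k - of_nat k * (r + s) + r * s"
    by (simp add: algebra_simps)
  also have "\<dots> = of_nat k * of_nat k - of_nat k * (of_nat lambda - of_nat mu) + (of_nat mu - of_nat k)"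
    unfolding eigenvalues ..
  also have "\<dots> = of_nat (card V) * of_nat mu"
    using parameter_identity[OF \<open>V \<noteq> {}\<close>] by (simp add: algebra_simps)
  finally show ?thesis ..
qed

lemma sum_shifted_adj_square:
  fixes r s :: rat
  assumes eigenvalues: "r + s = of_nat lambda - of_nat mu" "r * s = of_nat mu - of_nat k"
    and x: "x \<in> V" and y: "y \<in> V"
  shows "(\<Sum>z\<in>V. (of_bool (adj x z) - s * of_bool (x = z)) * (of_bool (adj z y) - s * of_bool (z = y)))
    = of_nat mu + (r - s) * (of_bool (adj x y) - s * of_bool (x = y))"
proof -
  have k_minus_mu: "of_nat k - of_nat mu = - (r * s)"
    using eigenvalues(2) by simp
  have "(of_bool (adj x z) - s * of_bool (x = z)) * (of_bool (adj z y) - s * of_bool (z = y))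
      = of_bool (adj x z) * of_bool (adj z y) - s * (of_bool (z = y) * of_bool (adj x z))
      - s * (of_bool (z = x) * of_bool (adj z y)) + s\<^sup>2 * (of_bool (z = x) * of_bool (z = y))" for z
    by (auto simp: algebra_simps power2_eq_square)
  then have "(\<Sum>z\<in>V. (of_bool (adj x z) - s * of_bool (x = z)) * (of_bool (adj z y) - s * of_bool (z = y)))
      = (\<Sum>z\<in>V. of_bool (adj x z) * of_bool (adj z y))
      - s * of_bool (adj x y) - s * of_bool (adj x y) + s\<^sup>2 * of_bool (x = y)"
    using x y by (simp add: sum.distrib sum_subtractf sum_distrib_left[symmetric] sum_of_bool_eq_mult)
  also have "\<dots> = of_nat mu + (r - s) * (of_bool (adj x y) - s * of_bool (x = y))"
    unfolding sum_adj_adj[OF x y] eigenvalues(1)[symmetric] k_minus_mu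
    by (simp add: algebra_simps power2_eq_square)
  finally show ?thesis .
qed

lemma eigenprojection_idempotent:
  assumes eigenvalues: "r + s = of_nat lambda - of_nat mu" "r * s = of_nat mu - of_nat k"
    and x: "x \<in> V" and y: "y \<in> V"
  shows "(\<Sum>z\<in>V. eigenprojection r s x z * eigenprojection r s z y) = eigenprojection r s x y"
proof -
  define B where "B u w = of_bool (adj u w) - s * of_bool (u = w)" for u w
  define \<beta> where "\<beta> = (of_nat k - s) / of_nat (card V)"
  have "V \<noteq> {}" using x by blast
  then have v_\<beta>: "of_nat (card V) * \<beta> = of_nat k - s"
    using finite_vertices by (simp add: \<beta>_def card_gt_0_iff)
  have row: "(\<Sum>z\<in>V. B x z) = of_nat k - s"
    using x sum_adj_row[OF x] finite_vertices by (simp add: B_def sum_subtractf sum_distrib_left[symmetric])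
  have col: "(\<Sum>z\<in>V. B z y) = of_nat k - s"
    using y sum_adj_col[OF y] finite_vertices by (simp add: B_def sum_subtractf sum_distrib_left[symmetric])
  have square: "(\<Sum>z\<in>V. B x z * B z y) = of_nat mu + (r - s) * B x y"
    unfolding B_def by (rule sum_shifted_adj_square[OF eigenvalues x y])
  have mu: "of_nat mu = \<beta> * (of_nat k - r)"
    using eigenvalues_parameter_identity[OF eigenvalues \<open>V \<noteq> {}\<close>] v_\<beta> \<open>V \<noteq> {}\<close> finite_vertices
    by (simp add: \<beta>_def field_simps card_gt_0_iff)
  have "(\<Sum>z\<in>V. (B x z - \<beta>) * (B z y - \<beta>))
      = (\<Sum>z\<in>V. B x z * B z y) - \<beta> * (\<Sum>z\<in>V. B z y) - \<beta> * (\<Sum>z\<in>V. B x z) + of_nat (card V) * \<beta> * \<beta>"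
    by (simp add: algebra_simps sum.distrib sum_subtractf sum_distrib_left)
  also have "\<dots> = (r - s) * (B x y - \<beta>)"
    unfolding square row col v_\<beta> mu by (simp add: algebra_simps)
  finally have "(\<Sum>z\<in>V. (B x z - \<beta>) * (B z y - \<beta>)) = (r - s) * (B x y - \<beta>)" .
  then show ?thesis
    unfolding eigenprojection_def B_def[symmetric] \<beta>_def[symmetric]
    by (simp add: sum_divide_distrib[symmetric] power2_eq_square)
qed

lemma eigenprojection_trace_fixed_point_free:
  assumes "V \<noteq> {}" and fixed_point_free: "\<And>x. x \<in> V \<Longrightarrow> f x \<noteq> x"
  shows "(\<Sum>x\<in>V. eigenprojection r s x (f x)) = (of_nat (card {x\<in>V. adj x (f x)}) - (of_nat k - s)) / (r - s)"
proof -
  have "(\<Sum>x\<in>V. eigenprojection r s x (f x))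
      = (\<Sum>x\<in>V. (of_bool (adj x (f x)) - (of_nat k - s) / of_nat (card V)) / (r - s))"
    using fixed_point_free by (intro sum.cong refl) (simp add: eigenprojection_def, metis)
  also have "\<dots> = (\<Sum>x\<in>V. of_bool (adj x (f x)) - (of_nat k - s) / of_nat (card V)) / (r - s)"
    by (simp add: sum_divide_distrib)
  also have "\<dots> = (of_nat (card {x\<in>V. adj x (f x)}) - (of_nat k - s)) / (r - s)"
    using assms(1) finite_vertices by (simp add: sum_subtractf sum_of_bool_card card_gt_0_iff)
  finally show ?thesis .
qed

end

locale srg_automorphism_group =
  strongly_regular_graph V adj k lambda mu + group_action G V \<phi>
  for V :: "'a set" and adj and k lambda mu and G (structure) and \<phi> +
  assumes adj_invariant: "\<lbrakk>g \<in> carrier G; x \<in> V; y \<in> V\<rbrakk> \<Longrightarrow> adj (\<phi> g x) (\<phi> g y) \<longleftrightarrow> adj x y"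
begin

lemma eigenprojection_invariant:
  assumes "g \<in> carrier G" and "x \<in> V" and "y \<in> V"
  shows "eigenprojection r s (\<phi> g x) (\<phi> g y) = eigenprojection r s x y"
  using assms adj_invariant inj_prop[OF assms(1)] by (simp add: eigenprojection_def inj_on_eq_iff)

lemma eigenprojection_twisted_mult:
  assumes eigenvalues: "r + s = of_nat lambda - of_nat mu" "r * s = of_nat mu - of_nat k"
    and g: "g \<in> carrier G" and h: "h \<in> carrier G" and x: "x \<in> V" and y: "y \<in> V"
  shows "(\<Sum>z\<in>V. eigenprojection r s x (\<phi> g z) * eigenprojection r s z (\<phi> h y))
    = eigenprojection r s x (\<phi> (g \<otimes> h) y)"
proof -
  let ?E = "eigenprojection r s"
  have hy: "\<phi> h y \<in> V" by (rule element_image[OF h y refl])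
  have ghy: "\<phi> g (\<phi> h y) \<in> V" by (rule element_image[OF g hy refl])
  have "(\<Sum>z\<in>V. ?E x (\<phi> g z) * ?E z (\<phi> h y)) = (\<Sum>z\<in>V. ?E x (\<phi> g z) * ?E (\<phi> g z) (\<phi> g (\<phi> h y)))"
    by (intro sum.cong refl) (simp add: eigenprojection_invariant g hy)
  also have "\<dots> = (\<Sum>w\<in>V. ?E x w * ?E w (\<phi> g (\<phi> h y)))"
    by (rule sum.reindex_bij_betw[OF bij_betw_action[OF g], of "\<lambda>w. ?E x w * ?E w (\<phi> g (\<phi> h y))"])
  also have "\<dots> = ?E x (\<phi> g (\<phi> h y))"
    by (rule eigenprojection_idempotent[OF eigenvalues x ghy])
  also have "\<phi> g (\<phi> h y) = \<phi> (g \<otimes> h) y"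
    by (rule composition_rule[OF y g h, symmetric])
  finally show ?thesis .
qed

lemma eigenprojection_trace_in_Ints:
  assumes "finite (carrier G)"
    and eigenvalues: "r + s = of_nat lambda - of_nat mu" "r * s = of_nat mu - of_nat k"
    and "g \<in> carrier G"
  shows "(\<Sum>x\<in>V. eigenprojection r s x (\<phi> g x)) \<in> \<int>"
proof -
  interpret group G by (rule acting_group)
  show ?thesis
    by (rule kernel_trace_in_Ints[where K = "\<lambda>g x y. eigenprojection r s x (\<phi> g y)",
          OF assms(1) finite_vertices eigenprojection_twisted_mult[OF eigenvalues] assms(4)])
qed

end

section \<open>Generalized quadrangles\<close>

locale generalized_quadrangle =
  fixes P :: "'p set" and L :: "'l set" and I :: "'p \<Rightarrow> 'l \<Rightarrow> bool" and s t :: nat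
  assumes gen_quadrangle: "gen_quadrangle P L I s t"
begin

definition collinear :: "'p \<Rightarrow> 'p \<Rightarrow> bool" where
  "collinear x y \<longleftrightarrow> x \<noteq> y \<and> (\<exists>l\<in>L. I x l \<and> I y l)"

definition lines_through :: "'p \<Rightarrow> 'l set" where
  "lines_through x = {l\<in>L. I x l}"

definition points_on :: "'l \<Rightarrow> 'p set" where
  "points_on l = {p\<in>P. I p l}"

lemma points_nonempty: "P \<noteq> {}"
  using gen_quadrangle unfolding gen_quadrangle_def by (elim conjE)

lemma card_lines_through: "x \<in> P \<Longrightarrow> card (lines_through x) = t + 1"
  using gen_quadrangle unfolding gen_quadrangle_def lines_through_def by (elim conjE) simp

lemma card_points_on: "l \<in> L \<Longrightarrow> card (points_on l) = s + 1"
  using gen_quadrangle unfolding gen_quadrangle_def points_on_def by (elim conjE) simp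

lemma line_unique:
  "\<lbrakk>p \<in> P; p' \<in> P; l \<in> L; l' \<in> L; p \<noteq> p'; I p l; I p' l; I p l'; I p' l'\<rbrakk> \<Longrightarrow> l = l'"
  using gen_quadrangle unfolding gen_quadrangle_def by (elim conjE) blast

lemma quadrangle_axiom:
  assumes "p \<in> P" and "l \<in> L" and "\<not> I p l"
  shows "\<exists>!p'. p' \<in> P \<and> I p' l \<and> (\<exists>m\<in>L. I p m \<and> I p' m)"
proof -
  have "\<forall>p\<in>P. \<forall>l\<in>L. \<not> I p l \<longrightarrow> (\<exists>!p'. p' \<in> P \<and> I p' l \<and> (\<exists>m\<in>L. I p m \<and> I p' m))"
    using gen_quadrangle unfolding gen_quadrangle_def by (elim conjE)
  with assms show ?thesis by blast
qed

lemma finite_lines_through: "x \<in> P \<Longrightarrow> finite (lines_through x)"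
  using card_lines_through card.infinite by fastforce

lemma finite_points_on: "l \<in> L \<Longrightarrow> finite (points_on l)"
  using card_points_on card.infinite by fastforce

lemma finite_points: "finite P"
proof -
  obtain x0 where x0: "x0 \<in> P" using points_nonempty by blast
  obtain l0 where l0: "l0 \<in> lines_through x0"
    using card_lines_through[OF x0] by fastforce
  then have l0L: "l0 \<in> L" by (simp add: lines_through_def)
  have "P \<subseteq> (\<Union>p\<in>points_on l0. \<Union>m\<in>lines_through p. points_on m)"
  proof
    fix y assume y: "y \<in> P"
    show "y \<in> (\<Union>p\<in>points_on l0. \<Union>m\<in>lines_through p. points_on m)"
    proof (cases "I y l0")
      case True
      then show ?thesis using y l0L by (auto simp: points_on_def lines_through_def)
    next
      case False
      then obtain p' m where "p' \<in> P" "I p' l0" "m \<in> L" "I y m" "I p' m"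
        using quadrangle_axiom[OF y l0L] by blast
      then show ?thesis using y l0L by (auto simp: points_on_def lines_through_def)
    qed
  qed
  moreover have "finite (\<Union>p\<in>points_on l0. \<Union>m\<in>lines_through p. points_on m)"
    using finite_points_on[OF l0L] finite_lines_through finite_points_on
    by (auto simp: points_on_def lines_through_def)
  ultimately show ?thesis by (rule finite_subset)
qed

lemma card_collinear:
  assumes x: "x \<in> P"
  shows "card {y\<in>P. collinear x y} = s * (t + 1)"
proof -
  have "{y\<in>P. collinear x y} = (\<Union>l\<in>lines_through x. points_on l - {x})"
    unfolding collinear_def lines_through_def points_on_def by auto
  also have "card \<dots> = (\<Sum>l\<in>lines_through x. card (points_on l - {x}))"
  proof (rule card_UN_disjoint)
    show "finite (lines_through x)" using finite_lines_through[OF x] .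
    show "\<forall>l\<in>lines_through x. finite (points_on l - {x})"
      using finite_points_on by (auto simp: lines_through_def)
    show "\<forall>l\<in>lines_through x. \<forall>l'\<in>lines_through x. l \<noteq> l' \<longrightarrow> (points_on l - {x}) \<inter> (points_on l' - {x}) = {}"
      using line_unique x unfolding lines_through_def points_on_def by blast
  qed
  also have "\<dots> = (\<Sum>l\<in>lines_through x. s)"
  proof (rule sum.cong)
    fix l assume "l \<in> lines_through x"
    then have "x \<in> points_on l" "l \<in> L" using x by (auto simp: lines_through_def points_on_def)
    then show "card (points_on l - {x}) = s" using card_points_on finite_points_on by simp
  qed simp
  also have "\<dots> = s * (t + 1)" using card_lines_through[OF x] by simp
  finally show ?thesis .
qed

lemma card_common_collinear_of_collinear:
  assumes x: "x \<in> P" and y: "y \<in> P" and "collinear x y"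
  shows "card {z\<in>P. collinear x z \<and> collinear z y} = s - 1"
proof -
  obtain l where l: "l \<in> L" "I x l" "I y l" "x \<noteq> y"
    using \<open>collinear x y\<close> unfolding collinear_def by blast
  have "{z\<in>P. collinear x z \<and> collinear z y} = points_on l - {x, y}"
  proof (intro equalityI subsetI)
    fix z assume "z \<in> points_on l - {x, y}"
    then show "z \<in> {z\<in>P. collinear x z \<and> collinear z y}"
      using l unfolding points_on_def collinear_def by auto
  next
    fix z assume "z \<in> {z\<in>P. collinear x z \<and> collinear z y}"
    then obtain m1 m2 where z: "z \<in> P" "z \<noteq> x" "z \<noteq> y"
      and m: "m1 \<in> L" "I x m1" "I z m1" "m2 \<in> L" "I y m2" "I z m2"
      unfolding collinear_def by blast
    have "I z l"
    proof (rule ccontr)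
      assume "\<not> I z l"
      from quadrangle_axiom[OF z(1) l(1) this] x y l m show False by blast
    qed
    with z show "z \<in> points_on l - {x, y}" by (simp add: points_on_def)
  qed
  moreover have "{x, y} \<subseteq> points_on l" using l x y by (simp add: points_on_def)
  ultimately show ?thesis
    using finite_points_on[OF l(1)] card_points_on[OF l(1)] l(4) by (simp add: card_Diff_subset)
qed

lemma card_common_collinear_of_noncollinear:
  assumes x: "x \<in> P" and y: "y \<in> P" and "x \<noteq> y" and "\<not> collinear x y"
  shows "card {z\<in>P. collinear x z \<and> collinear z y} = t + 1"
proof -
  have not_on: "\<not> I x m" if "m \<in> lines_through y" for m
    using that assms unfolding collinear_def lines_through_def by auto
  define foot where "foot m = (THE p. p \<in> P \<and> I p m \<and> (\<exists>m'\<in>L. I x m' \<and> I p m'))" for m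
  have foot: "foot m \<in> P \<and> I (foot m) m \<and> (\<exists>m'\<in>L. I x m' \<and> I (foot m) m')"
    and foot_unique: "\<And>p. p \<in> P \<Longrightarrow> I p m \<Longrightarrow> \<exists>m'\<in>L. I x m' \<and> I p m' \<Longrightarrow> foot m = p"
    if m: "m \<in> lines_through y" for m
  proof -
    have "m \<in> L" using m by (simp add: lines_through_def)
    note unique = quadrangle_axiom[OF x this not_on[OF m]]
    show "foot m \<in> P \<and> I (foot m) m \<and> (\<exists>m'\<in>L. I x m' \<and> I (foot m) m')"
      unfolding foot_def by (rule theI'[OF unique])
    then show "\<And>p. p \<in> P \<Longrightarrow> I p m \<Longrightarrow> \<exists>m'\<in>L. I x m' \<and> I p m' \<Longrightarrow> foot m = p"
      using unique by blast
  qed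
  have "bij_betw foot (lines_through y) {z\<in>P. collinear x z \<and> collinear z y}"
  proof (rule bij_betw_imageI)
    show "inj_on foot (lines_through y)"
    proof (rule inj_onI)
      fix m1 m2 assume m: "m1 \<in> lines_through y" "m2 \<in> lines_through y" and "foot m1 = foot m2"
      moreover have "foot m1 \<noteq> y"
        using foot[OF m(1)] assms unfolding collinear_def by auto
      ultimately show "m1 = m2"
        using line_unique[of "foot m1" y m1 m2] foot[OF m(1)] foot[OF m(2)] y
        unfolding lines_through_def by auto
    qed
    show "foot ` lines_through y = {z\<in>P. collinear x z \<and> collinear z y}"
    proof (intro equalityI subsetI)
      fix z assume "z \<in> foot ` lines_through y"
      then obtain m where m: "m \<in> lines_through y" and z: "z = foot m" by blast
      have "foot m \<noteq> x" using foot[OF m] not_on[OF m] by auto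
      moreover have "foot m \<noteq> y"
        using foot[OF m] assms unfolding collinear_def by auto
      ultimately show "z \<in> {z\<in>P. collinear x z \<and> collinear z y}"
        using foot[OF m] m z unfolding collinear_def lines_through_def by auto
    next
      fix z assume z: "z \<in> {z\<in>P. collinear x z \<and> collinear z y}"
      then obtain m where m: "m \<in> L" "I y m" "I z m" unfolding collinear_def by blast
      then have "m \<in> lines_through y" by (simp add: lines_through_def)
      moreover have "foot m = z"
        using foot_unique[OF \<open>m \<in> lines_through y\<close>] z m unfolding collinear_def by blast
      ultimately show "z \<in> foot ` lines_through y" by blast
    qed
  qed
  then show ?thesis
    using card_lines_through[OF y] by (simp add: bij_betw_same_card)
qed

lemma collinear_sym: "collinear x y \<Longrightarrow> collinear y x"
  unfolding collinear_def by auto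

sublocale collinearity: strongly_regular_graph P collinear "s * (t + 1)" "s - 1" "t + 1"
proof
  show "finite P" by (rule finite_points)
  show "\<not> collinear x x" for x by (simp add: collinear_def)
  show "collinear y x" if "collinear x y" for x y using that by (rule collinear_sym)
  show "card {y\<in>P. collinear x y} = s * (t + 1)" if "x \<in> P" for x
    using that by (rule card_collinear)
  show "card {z\<in>P. collinear x z \<and> collinear z y} = s - 1"
    if "x \<in> P" "y \<in> P" "collinear x y" for x y
    using that by (rule card_common_collinear_of_collinear)
  show "card {z\<in>P. collinear x z \<and> collinear z y} = t + 1"
    if "x \<in> P" "y \<in> P" "x \<noteq> y" "\<not> collinear x y" for x y
    using that by (rule card_common_collinear_of_noncollinear)
qed

lemma card_points:
  assumes "s > 0"
  shows "card P = (s + 1) * (s * t + 1)"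
proof -
  have "(of_nat (s * (t + 1)) :: rat) * (of_nat (s * (t + 1)) - of_nat (s - 1) - 1)
      = (of_nat (card P) - of_nat (s * (t + 1)) - 1) * of_nat (t + 1)"
    by (rule collinearity.parameter_identity[OF points_nonempty])
  then have "(of_nat t + 1) * (of_nat (card P) - (of_nat s + 1) * (of_nat s * of_nat t + 1)) = (0 :: rat)"
    using assms by (simp add: of_nat_diff algebra_simps)
  then have "(of_nat (card P) :: rat) = (of_nat s + 1) * (of_nat s * of_nat t + 1)"
    by (simp add: add_eq_0_iff_both_eq_0)
  then have "(of_nat (card P) :: rat) = of_nat ((s + 1) * (s * t + 1))"
    by (simp add: algebra_simps)
  then show ?thesis by (simp only: of_nat_eq_iff)
qed

lemma collinear_invariant:
  assumes coll: "collineation_action G P L I \<phi> \<psi>"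
    and g: "g \<in> carrier G" and x: "x \<in> P" and y: "y \<in> P"
  shows "collinear (\<phi> g x) (\<phi> g y) \<longleftrightarrow> collinear x y"
proof -
  interpret points: group_action G P \<phi>
    using coll by (simp add: collineation_action_def)
  interpret lines: group_action G L \<psi>
    using coll by (simp add: collineation_action_def)
  interpret group G by (rule points.acting_group)
  have image: "collinear (\<phi> h u) (\<phi> h w)"
    if h: "h \<in> carrier G" and u: "u \<in> P" and w: "w \<in> P" and "collinear u w" for h u w
  proof -
    obtain l where l: "l \<in> L" "I u l" "I w l" and "u \<noteq> w"
      using \<open>collinear u w\<close> unfolding collinear_def by blast
    then have "\<phi> h u \<noteq> \<phi> h w"
      using points.inj_prop[OF h] u w by (auto dest: inj_onD)
    moreover have "\<psi> h l \<in> L" "I (\<phi> h u) (\<psi> h l)" "I (\<phi> h w) (\<psi> h l)"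
      using lines.element_image[OF h l(1) refl] coll h u w l
      unfolding collineation_action_def by blast+
    ultimately show ?thesis unfolding collinear_def by blast
  qed
  show ?thesis
  proof
    assume "collinear (\<phi> g x) (\<phi> g y)"
    from image[OF inv_closed[OF g] points.element_image[OF g x refl] points.element_image[OF g y refl] this]
    show "collinear x y"
      using points.orbit_sym_aux[OF g x refl] points.orbit_sym_aux[OF g y refl] by simp
  qed (rule image[OF g x y])
qed

definition collinear_image_count :: "('g \<Rightarrow> 'p \<Rightarrow> 'p) \<Rightarrow> 'g \<Rightarrow> nat" where
  "collinear_image_count \<phi> g = card {x\<in>P. collinear x (\<phi> g x)}"

theorem collinear_image_count_cong:
  assumes coll: "collineation_action G P L I \<phi> \<psi>" and regular: "regular_on_points G P \<phi>"
    and "s > 0" and g: "g \<in> carrier G" and nontrivial: "g \<noteq> \<one>\<^bsub>G\<^esub>"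
  shows "int (s + t) dvd int (collinear_image_count \<phi> g) - int (s * (t + 1) + t + 1)"
proof -
  interpret group_action G P \<phi>
    using coll by (simp add: collineation_action_def)
  interpret srg_automorphism_group P collinear "s * (t + 1)" "s - 1" "t + 1" G \<phi>
    by (intro srg_automorphism_group.intro srg_automorphism_group_axioms.intro
        collinearity.strongly_regular_graph_axioms group_action_axioms)
      (rule collinear_invariant[OF coll])
  obtain x0 where "x0 \<in> P" using points_nonempty by blast
  have "finite (carrier G)"
    using bij_betw_finite[OF orbit_map_bij_if_regular[OF regular \<open>x0 \<in> P\<close>]] finite_points by simp
  have fixed_point_free: "\<phi> g x \<noteq> x" if "x \<in> P" for x
  proof
    assume "\<phi> g x = x"
    then have "g \<in> stabilizer G \<phi> x" using g by (simp add: stabilizer_def)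
    with regular nontrivial \<open>x \<in> P\<close> show False by (simp add: regular_on_points_def)
  qed
  \<comment> \<open>the eigenvalues of the collinearity graph other than \<open>s (t + 1)\<close>\<close>
  define r :: rat where "r = of_nat s - 1"
  define r' :: rat where "r' = - (of_nat t + 1)"
  have eigenvalues: "r + r' = of_nat (s - 1) - of_nat (t + 1)" "r * r' = of_nat (t + 1) - of_nat (s * (t + 1))"
    using \<open>s > 0\<close> by (simp_all add: r_def r'_def of_nat_diff algebra_simps)
  have "(\<Sum>x\<in>P. collinearity.eigenprojection r r' x (\<phi> g x)) \<in> \<int>"
    by (rule eigenprojection_trace_in_Ints[OF \<open>finite (carrier G)\<close> eigenvalues g])
  then obtain z where "(\<Sum>x\<in>P. collinearity.eigenprojection r r' x (\<phi> g x)) = of_int z"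
    by (rule Ints_cases)
  moreover have "(\<Sum>x\<in>P. collinearity.eigenprojection r r' x (\<phi> g x))
      = (of_nat (card {x\<in>P. collinear x (\<phi> g x)}) - of_nat (s * (t + 1) + t + 1)) / of_nat (s + t)"
    using collinearity.eigenprojection_trace_fixed_point_free[OF points_nonempty fixed_point_free]
    by (simp add: r_def r'_def algebra_simps)
  ultimately have "of_int (int (collinear_image_count \<phi> g) - int (s * (t + 1) + t + 1))
      = (of_int (int (s + t) * z) :: rat)"
    using \<open>s > 0\<close> by (simp add: collinear_image_count_def field_simps)
  then have "int (collinear_image_count \<phi> g) - int (s * (t + 1) + t + 1) = int (s + t) * z"
    by (simp only: of_int_eq_iff)
  then show ?thesis by (metis dvd_triv_left)
qed

lemma collinear_image_count_inv:
  assumes "group_action G P \<phi>" and "g \<in> carrier G"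
  shows "collinear_image_count \<phi> (inv\<^bsub>G\<^esub> g) = collinear_image_count \<phi> g"
  unfolding collinear_image_count_def
  by (rule group_action.card_related_to_image_inv[OF assms(1) _ assms(2)]) (erule collinear_sym)

lemma sum_collinear_image_count_nontrivial:
  assumes "group_action G P \<phi>" and "regular_on_points G P \<phi>"
  shows "(\<Sum>g\<in>carrier G - {\<one>\<^bsub>G\<^esub>}. collinear_image_count \<phi> g) = card P * (s * (t + 1))"
proof -
  interpret group_action G P \<phi> by fact
  interpret group G by (rule acting_group)
  have "\<phi> \<one>\<^bsub>G\<^esub> x = x" if "x \<in> P" for x
    using fun_cong[OF id_eq_one, of x] that by simp
  then have "{x\<in>P. collinear x (\<phi> \<one>\<^bsub>G\<^esub> x)} = {}"
    using collinearity.adj_irrefl by auto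
  then have "collinear_image_count \<phi> \<one>\<^bsub>G\<^esub> = 0"
    by (metis card.empty collinear_image_count_def)
  then have "(\<Sum>g\<in>carrier G - {\<one>\<^bsub>G\<^esub>}. collinear_image_count \<phi> g) = (\<Sum>g\<in>carrier G. collinear_image_count \<phi> g)"
    by (simp add: sum_diff1_nat)
  also have "\<dots> = (\<Sum>x\<in>P. card {y\<in>P. collinear x y})"
    unfolding collinear_image_count_def by (rule sum_card_related_to_image[OF assms(2) finite_points])
  also have "\<dots> = card P * (s * (t + 1))"
    by (simp add: card_collinear)
  finally show ?thesis .
qed

lemma sum_collinear_image_count_quotients:
  assumes coll: "collineation_action G P L I \<phi> \<psi>" and regular: "regular_on_points G P \<phi>"
    and "s > 0"
  shows "int (s + t) * (\<Sum>g\<in>carrier G - {\<one>\<^bsub>G\<^esub>}.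
      (int (collinear_image_count \<phi> g) - int (s * (t + 1) + t + 1)) div int (s + t))
    = int (card P) * int (s * (t + 1)) - (int (card P) - 1) * int (s * (t + 1) + t + 1)"
proof -
  interpret group_action G P \<phi>
    using coll by (simp add: collineation_action_def)
  interpret group G by (rule acting_group)
  let ?S = "carrier G - {\<one>\<^bsub>G\<^esub>}"
  have "card ?S = card P - 1"
    using order_eq_card_if_regular[OF regular points_nonempty] by (simp add: Coset.order_def)
  moreover have "card P > 0"
    using finite_points points_nonempty by (simp add: card_gt_0_iff)
  ultimately have card_S: "int (card ?S) = int (card P) - 1" by simp
  have "int (s + t) * (\<Sum>g\<in>?S. (int (collinear_image_count \<phi> g) - int (s * (t + 1) + t + 1)) div int (s + t))
      = (\<Sum>g\<in>?S. int (collinear_image_count \<phi> g) - int (s * (t + 1) + t + 1))"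
    unfolding sum_distrib_left
    using collinear_image_count_cong[OF coll regular \<open>s > 0\<close>] by (intro sum.cong) auto
  also have "\<dots> = int (\<Sum>g\<in>?S. collinear_image_count \<phi> g) - int (card ?S) * int (s * (t + 1) + t + 1)"
    by (simp add: sum_subtractf)
  also have "\<dots> = int (card P) * int (s * (t + 1)) - (int (card P) - 1) * int (s * (t + 1) + t + 1)"
    unfolding sum_collinear_image_count_nontrivial[OF group_action_axioms regular] card_S by simp
  finally show ?thesis .
qed

end

theorem mainTheorem14:
  fixes q :: nat
    and P :: "'p set" and L :: "'l set" and I :: "'p \<Rightarrow> 'l \<Rightarrow> bool"
    and G :: "('g, 'b) monoid_scheme"
    and \<phi> :: "'g \<Rightarrow> 'p \<Rightarrow> 'p" and \<psi> :: "'g \<Rightarrow> 'l \<Rightarrow> 'l"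
  assumes "even q" and "q \<ge> 2"
    and "gen_quadrangle P L I q (q^2 - q)"
    and "collineation_action G P L I \<phi> \<psi>"
    and "regular_on_points G P \<phi>"
  shows False
proof -
  interpret generalized_quadrangle P L I q "q^2 - q"
    by (rule generalized_quadrangle.intro) fact
  interpret group_action G P \<phi>
    using assms(4) by (simp add: collineation_action_def)
  interpret group G by (rule acting_group)
  \<comment> \<open>with \<open>(s, t) = (q, q\<^sup>2 - q)\<close>: \<open>s (t + 1) + t + 1 = q\<^sup>3 + 1\<close> and \<open>s + t = q\<^sup>2\<close>\<close>
  define w where "w g = (int (collinear_image_count \<phi> g) - int (q * (q^2 - q + 1) + (q^2 - q) + 1))
    div int (q + (q^2 - q))" for g
  have "odd (Coset.order G)"
    using order_eq_card_if_regular[OF assms(5) points_nonempty] card_points assms(1,2) by simp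
  then have "even (\<Sum>g\<in>carrier G - {\<one>\<^bsub>G\<^esub>}. w g)"
    by (rule even_sum_nontrivial_if_odd_order) (simp add: w_def collinear_image_count_inv[OF group_action_axioms])
  have sum_w: "int (q + (q^2 - q)) * (\<Sum>g\<in>carrier G - {\<one>\<^bsub>G\<^esub>}. w g)
      = int (card P) * int (q * (q^2 - q + 1)) - (int (card P) - 1) * int (q * (q^2 - q + 1) + (q^2 - q) + 1)"
    unfolding w_def using assms(2) by (intro sum_collinear_image_count_quotients[OF assms(4,5)]) simp
  define Q where "Q = int q"
  have t: "int (q^2 - q) = Q^2 - Q"
    using assms(2) by (simp add: Q_def of_nat_diff power2_eq_square)
  have k: "int (q * (q^2 - q + 1)) = Q * (Q^2 - Q + 1)"
    by (simp only: of_nat_mult of_nat_add of_nat_1 t Q_def)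
  have card_P: "int (card P) = (Q + 1) * (Q * (Q^2 - Q) + 1)"
    using card_points assms(2) by (simp only: of_nat_mult of_nat_add of_nat_1 t Q_def)
  have "Q^2 * (\<Sum>g\<in>carrier G - {\<one>\<^bsub>G\<^esub>}. w g) = Q^2 * (- (Q^3 + 1) * (Q - 1))"
    using sum_w unfolding of_nat_add of_nat_1 t k card_P Q_def[symmetric]
    by (simp add: algebra_simps power2_eq_square power3_eq_cube)
  then have "(\<Sum>g\<in>carrier G - {\<one>\<^bsub>G\<^esub>}. w g) = - (Q^3 + 1) * (Q - 1)"
    using assms(2) by (simp add: Q_def)
  with \<open>even (\<Sum>g\<in>carrier G - {\<one>\<^bsub>G\<^esub>}. w g)\<close> show False
    using assms(1) by (simp add: Q_def)
qed

end
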